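(* Let $G$ be a looped simple graph and let $T_1,T_2$ be disjoint transversals of $W(G)$ with $r(T_1)+r(T_2)=|V(G)|$, where $r$ is the rank function of $M[IAS(G)]$. Let $T_3=W(G)\setminus(T_1\cup T_2)$, and for $i\in\{1,2,3\}$ let $M_i$ be the binary matroid on $V(G)$ obtained from $M[IAS(G)]|T_i$ via the bijection $T_i\to V(G)$ sending the element of $T_i$ in the vertex triple of $v$ to $v$. Then $M_1$ and $M_2$ have the same bicycle space, and this bicycle space equals the cycle space of $M_3$.
   Context: A looped simple graph is a finite graph in which each vertex carries at most one loop and no two distinct vertices are joined by more than one edge; "adjacent" refers to distinct vertices joined by a non-loop edge. $A(G)$ is the $V(G)\times V(G)$ matrix over $GF(2)$ with diagonal entry $1$ exactly at looped vertices and off-diagonal entry $1$ exactly for adjacent pairs. $IAS(G)=(I\mid A(G)\mid A(G)+I)$ over $GF(2)$, rows indexed by $V(G)$; the $v$-columns of the three blocks are labelled $\phi_G(v),\chi_G(v),\psi_G(v)$. $M[IAS(G)]$ is the binary column matroid of $IAS(G)$ on $W(G)=\{\phi_G(v),\chi_G(v),\psi_G(v):v\in V(G)\}$; the vertex triple of $v$ is $\{\phi_G(v),\chi_G(v),\psi_G(v)\}$, and a transversal contains exactly one element of each vertex triple. For a binary matroid on a set $E$, identify subsets of $E$ with vectors in $GF(2)^E$: the cycle space is the span of the circuits (equivalently, for any $GF(2)$-representation, the set of vectors orthogonal to every row), the cocycle space is the span of the cocircuits (the orthogonal complement of the cycle space), and the bicycle space is the intersection of the cycle space and the cocycle space. 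*)

theory Defs
  imports Main "HOL-Library.Z2"
begin

text \<open>A looped simple graph on the finite vertex set V is given by a symmetric
relation E on V: for v \<noteq> w, E v w means v and w are adjacent; E v v means v is looped.\<close>

definition looped_simple_graph :: "'a set \<Rightarrow> ('a \<Rightarrow> 'a \<Rightarrow> bool) \<Rightarrow> bool" where
  "looped_simple_graph V E \<longleftrightarrow> finite V \<and> (\<forall>v\<in>V. \<forall>w\<in>V. E v w = E w v)"

definition adj_mat :: "('a \<Rightarrow> 'a \<Rightarrow> bool) \<Rightarrow> 'a \<Rightarrow> 'a \<Rightarrow> bit" where
  "adj_mat E v w = (if E v w then 1 else 0)"

datatype wkind = Phi | Chi | Psi

text \<open>W(G): phi_G(v) = (Phi, v), chi_G(v) = (Chi, v), psi_G(v) = (Psi, v).\<close>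
definition W :: "'a set \<Rightarrow> (wkind \<times> 'a) set" where
  "W V = UNIV \<times> V"

text \<open>Column of IAS(G) = (I | A(G) | A(G)+I) labelled by an element of W(G); rows indexed by V.\<close>
fun ias_col :: "('a \<Rightarrow> 'a \<Rightarrow> bool) \<Rightarrow> wkind \<times> 'a \<Rightarrow> 'a \<Rightarrow> bit" where
  "ias_col E (Phi, v) r = (if r = v then 1 else 0)"
| "ias_col E (Chi, v) r = adj_mat E r v"
| "ias_col E (Psi, v) r = adj_mat E r v + (if r = v then 1 else 0)"

definition transversal :: "'a set \<Rightarrow> (wkind \<times> 'a) set \<Rightarrow> bool" where
  "transversal V T \<longleftrightarrow> T \<subseteq> W V \<and> (\<forall>v\<in>V. \<exists>!k. (k, v) \<in> T)"

definition tv :: "(wkind \<times> 'a) set \<Rightarrow> 'a \<Rightarrow> wkind \<times> 'a" where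
  "tv T v = ((THE k. (k, v) \<in> T), v)"

definition bin_indep :: "'r set \<Rightarrow> ('e \<Rightarrow> 'r \<Rightarrow> bit) \<Rightarrow> 'e set \<Rightarrow> bool" where
  "bin_indep R col I \<longleftrightarrow> finite I \<and>
     (\<forall>J\<subseteq>I. J \<noteq> {} \<longrightarrow> \<not> (\<forall>r\<in>R. (\<Sum>x\<in>J. col x r) = 0))"

definition bin_rank :: "'r set \<Rightarrow> ('e \<Rightarrow> 'r \<Rightarrow> bit) \<Rightarrow> 'e set \<Rightarrow> nat" where
  "bin_rank R col S = Max {card I | I. I \<subseteq> S \<and> bin_indep R col I}"

text \<open>Cycle space (subsets of the ground set E identified with vectors in GF(2)^E):
  the vectors orthogonal to every row of the representation.\<close>
definition cycle_space :: "'r set \<Rightarrow> 'e set \<Rightarrow> ('e \<Rightarrow> 'r \<Rightarrow> bit) \<Rightarrow> 'e set set" where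
  "cycle_space R E col = {X. X \<subseteq> E \<and> (\<forall>r\<in>R. (\<Sum>x\<in>X. col x r) = 0)}"

definition cocycle_space :: "'r set \<Rightarrow> 'e set \<Rightarrow> ('e \<Rightarrow> 'r \<Rightarrow> bit) \<Rightarrow> 'e set set" where
  "cocycle_space R E col = {Y. Y \<subseteq> E \<and> (\<forall>X\<in>cycle_space R E col. even (card (X \<inter> Y)))}"

definition bicycle_space :: "'r set \<Rightarrow> 'e set \<Rightarrow> ('e \<Rightarrow> 'r \<Rightarrow> bit) \<Rightarrow> 'e set set" where
  "bicycle_space R E col = cycle_space R E col \<inter> cocycle_space R E col"

text \<open>M_i: the matroid on V obtained from M[IAS(G)]|T via v \<mapsto> element of T in the triple of v;
  its representation has rows V and column of v equal to the IAS column of tv T v.\<close>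
definition trans_col :: "('a \<Rightarrow> 'a \<Rightarrow> bool) \<Rightarrow> (wkind \<times> 'a) set \<Rightarrow> 'a \<Rightarrow> 'a \<Rightarrow> bit" where
  "trans_col E T v = ias_col E (tv T v)"

end

theory Submission
  imports Defs
begin

text \<open>Write K1, K2, K3 for the cycle spaces of M1, M2, M3. The column of Mi at v is
  a e_v + b A e_v, where (a, b) is one of the three nonzero vectors of GF(2)^2, chosen by which of
  phi, chi, psi lies in Ti. Two distinct such vectors form a basis of GF(2)^2 and A is symmetric;
  together this makes every cycle of M1 meet every cycle of M2 in an even number of vertices,
  so K2 is contained in the orthogonal complement of K1. Since dim Ki = n - r(Ti) and
  r(T1) + r(T2) = n, counting forces K2 and K1 to be the orthogonal complements of K1 and K2,
  i.e. the cocycle spaces of M1 and M2, so both bicycle spaces equal K1 \<inter> K2. The three coefficient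
  vectors sum to zero, so every column of M3 is the sum of the corresponding columns of M1 and M2;
  hence K1 \<inter> K2 \<subseteq> K3, while orthogonality of K3 to K1 and K2 gives K3 \<subseteq> K2 \<inter> K1.\<close>

declare add_bit_eq_xor [simp del] mult_bit_eq_and [simp del]

lemma bit_add_self [simp]: "(a::bit) + a = 0"
  by (cases a) simp_all

lemma bit_eq_iff_add_eq_0: "(a::bit) = b \<longleftrightarrow> a + b = 0"
  by (cases a; cases b) simp_all

lemma bit_add_eq_0_iff: "(a::bit) + b = 0 \<longleftrightarrow> (a = 0 \<longleftrightarrow> b = 0)"
  by (cases a; cases b) simp_all

lemma of_nat_bit_eq_0_iff: "(of_nat n :: bit) = 0 \<longleftrightarrow> even n"
  by (induction n) auto

lemma sum_sym_diff_bit: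
  assumes "finite A" "finite B"
  shows "sum (f :: _ \<Rightarrow> bit) (sym_diff A B) = sum f A + sum f B"
proof -
  have "sum f (sym_diff A B) = sum f (A - B) + sum f (B - A)"
    using assms by (intro sum.union_disjoint) auto
  moreover have "sum f A = sum f (A \<inter> B) + sum f (A - B)" "sum f B = sum f (A \<inter> B) + sum f (B - A)"
    using sum.Int_Diff[OF assms(1), of f B] sum.Int_Diff[OF assms(2), of f A]
    by (simp_all add: Int_commute)
  ultimately show ?thesis
    by (simp add: add.assoc add.left_commute)
qed

lemma even_card_sym_diff_Int:
  assumes "finite A" "finite B"
  shows "even (card (sym_diff A B \<inter> Y)) \<longleftrightarrow> (even (card (A \<inter> Y)) \<longleftrightarrow> even (card (B \<inter> Y)))"
proof -
  have card_Int: "(of_nat (card (X \<inter> Y)) :: bit) = (\<Sum>x\<in>X. of_bool (x \<in> Y))" if "finite X" for X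
    using that by (simp add: Int_def)
  have sd: "(of_nat (card (sym_diff A B \<inter> Y)) :: bit) = of_nat (card (A \<inter> Y)) + of_nat (card (B \<inter> Y))"
    using assms by (simp only: card_Int finite_UnI finite_Diff sum_sym_diff_bit)
  show ?thesis
    unfolding of_nat_bit_eq_0_iff[symmetric] sd bit_add_eq_0_iff ..
qed

definition col_sum :: "'r set \<Rightarrow> ('e \<Rightarrow> 'r \<Rightarrow> bit) \<Rightarrow> 'e set \<Rightarrow> 'r \<Rightarrow> bit" where
  "col_sum R col X = (\<lambda>r. if r \<in> R then \<Sum>x\<in>X. col x r else 0)"

lemma col_sum_sym_diff:
  "finite A \<Longrightarrow> finite B \<Longrightarrow>
     col_sum R col (sym_diff A B) = (\<lambda>r. col_sum R col A r + col_sum R col B r)"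
  by (auto simp: col_sum_def sum_sym_diff_bit)

lemma col_sum_eq_0_iff: "col_sum R col X = (\<lambda>_. 0) \<longleftrightarrow> (\<forall>r\<in>R. (\<Sum>x\<in>X. col x r) = 0)"
  by (auto simp: col_sum_def fun_eq_iff)

lemma cycle_space_eq: "cycle_space R S col = {X. X \<subseteq> S \<and> col_sum R col X = (\<lambda>_. 0)}"
  by (simp add: cycle_space_def col_sum_eq_0_iff)

lemma bin_indep_iff:
  "bin_indep R col I \<longleftrightarrow> finite I \<and> (\<forall>J\<subseteq>I. col_sum R col J = (\<lambda>_. 0) \<longrightarrow> J = {})"
  unfolding bin_indep_def col_sum_eq_0_iff by blast

lemma col_sum_fiber:
  assumes "finite S" "X0 \<subseteq> S"
  shows "{X \<in> Pow S. col_sum R col X = col_sum R col X0} = (\<lambda>Z. sym_diff Z X0) ` cycle_space R S col"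
proof -
  have fin: "finite X" if "X \<subseteq> S" for X
    using assms(1) that by (rule finite_subset[rotated])
  have shift: "col_sum R col X = col_sum R col X0 \<longleftrightarrow> col_sum R col (sym_diff X X0) = (\<lambda>_. 0)"
    if "X \<subseteq> S" for X
    by (simp only: col_sum_sym_diff[OF fin[OF that] fin[OF assms(2)]] fun_eq_iff
        bit_eq_iff_add_eq_0[symmetric])
  show ?thesis
  proof (intro equalityI subsetI)
    fix X assume "X \<in> {X \<in> Pow S. col_sum R col X = col_sum R col X0}"
    then have "X \<subseteq> S" "sym_diff X X0 \<in> cycle_space R S col"
      using shift assms(2) unfolding cycle_space_eq by auto
    moreover have "X = sym_diff (sym_diff X X0) X0"
      by blast
    ultimately show "X \<in> (\<lambda>Z. sym_diff Z X0) ` cycle_space R S col"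
      by blast
  next
    fix X assume "X \<in> (\<lambda>Z. sym_diff Z X0) ` cycle_space R S col"
    then obtain Z where Z: "Z \<in> cycle_space R S col" and X: "X = sym_diff Z X0"
      by blast
    have "X \<subseteq> S" "sym_diff X X0 = Z"
      using Z assms(2) unfolding X cycle_space_eq by auto
    then show "X \<in> {X \<in> Pow S. col_sum R col X = col_sum R col X0}"
      using shift Z unfolding cycle_space_eq by auto
  qed
qed

lemma card_Pow_eq_card_cycle_space_mult:
  assumes "finite S"
  shows "2 ^ card S = card (cycle_space R S col) * card (col_sum R col ` Pow S)"
proof -
  let ?K = "cycle_space R S col" and ?f = "col_sum R col"
  let ?F = "\<lambda>m. {X \<in> Pow S. ?f X = m}"
  have card_fiber: "card (?F m) = card ?K" if im: "m \<in> ?f ` Pow S" for m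
  proof -
    obtain X0 where X0: "X0 \<subseteq> S" and m: "m = ?f X0"
      using im by blast
    have "inj_on (\<lambda>Z. sym_diff Z X0) ?K"
      by (rule inj_on_inverseI[where g = "\<lambda>Z. sym_diff Z X0"]) blast
    then have "card ((\<lambda>Z. sym_diff Z X0) ` ?K) = card ?K"
      by (rule card_image)
    then show ?thesis
      unfolding m col_sum_fiber[OF assms X0] .
  qed
  have "2 ^ card S = card (Pow S)"
    using assms by (simp add: card_Pow)
  also have "Pow S = (\<Union>m\<in>?f ` Pow S. ?F m)"
    by blast
  also have "card \<dots> = (\<Sum>m\<in>?f ` Pow S. card (?F m))"
    using assms by (intro card_UN_disjoint) auto
  also have "\<dots> = card ?K * card (?f ` Pow S)"
    using card_fiber by simp
  finally show ?thesis .
qed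

lemma bin_rank_attained:
  assumes "finite S"
  obtains I where "I \<subseteq> S" "bin_indep R col I" "card I = bin_rank R col S"
    "\<And>I'. I' \<subseteq> S \<Longrightarrow> bin_indep R col I' \<Longrightarrow> card I' \<le> card I"
proof -
  let ?C = "{card I | I. I \<subseteq> S \<and> bin_indep R col I}"
  have "?C \<subseteq> {..card S}"
    using card_mono[OF assms] by auto
  then have fin: "finite ?C"
    by (rule finite_subset) simp
  have "bin_indep R col {}"
    by (simp add: bin_indep_def)
  then have ne: "?C \<noteq> {}"
    by blast
  obtain I where I: "I \<subseteq> S" "bin_indep R col I" "card I = Max ?C"
    using Max_in[OF fin ne] by auto
  show ?thesis
  proof (rule that[OF I(1,2)])
    show "card I = bin_rank R col S"
      unfolding bin_rank_def I(3) ..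
    show "card I' \<le> card I" if "I' \<subseteq> S" "bin_indep R col I'" for I'
      unfolding I(3) using fin that by (intro Max_ge) auto
  qed
qed

lemma bin_rank_le_card:
  assumes "finite S"
  shows "bin_rank R col S \<le> card S"
proof -
  obtain I where "I \<subseteq> S" "card I = bin_rank R col S"
    by (rule bin_rank_attained[OF assms])
  then show ?thesis
    using card_mono[OF assms] by metis
qed

lemma inj_on_col_sum_Pow:
  assumes "bin_indep R col I"
  shows "inj_on (col_sum R col) (Pow I)"
proof (rule inj_onI)
  fix J1 J2 assume J: "J1 \<in> Pow I" "J2 \<in> Pow I" "col_sum R col J1 = col_sum R col J2"
  have "finite I"
    using assms by (simp add: bin_indep_def)
  then have "finite J1" "finite J2"
    using J(1,2) by (auto intro: finite_subset)
  then have "col_sum R col (sym_diff J1 J2) = (\<lambda>_. 0)"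
    by (simp add: col_sum_sym_diff J(3))
  moreover have "sym_diff J1 J2 \<subseteq> I"
    using J(1,2) by blast
  ultimately have "sym_diff J1 J2 = {}"
    using assms unfolding bin_indep_iff by blast
  then show "J1 = J2"
    by blast
qed

lemma col_sum_add_mem_image_Pow:
  assumes "finite I" "a \<in> col_sum R col ` Pow I" "b \<in> col_sum R col ` Pow I"
  shows "(\<lambda>r. a r + b r) \<in> col_sum R col ` Pow I"
proof -
  obtain A B where "A \<subseteq> I" "B \<subseteq> I" "a = col_sum R col A" "b = col_sum R col B"
    using assms(2,3) by blast
  moreover from this have "finite A" "finite B"
    using assms(1) by (auto intro: finite_subset)
  ultimately have "(\<lambda>r. a r + b r) = col_sum R col (sym_diff A B)" "sym_diff A B \<in> Pow I"
    by (auto simp: col_sum_sym_diff)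
  then show ?thesis
    by (rule image_eqI)
qed

lemma col_sum_singleton_mem_image_Pow:
  assumes "I \<subseteq> S" "bin_indep R col I" "x \<in> S"
    and max: "\<And>I'. I' \<subseteq> S \<Longrightarrow> bin_indep R col I' \<Longrightarrow> card I' \<le> card I"
  shows "col_sum R col {x} \<in> col_sum R col ` Pow I"
proof (cases "x \<in> I")
  case True
  then show ?thesis
    by blast
next
  case False
  have fin: "finite I"
    using assms(2) by (simp add: bin_indep_def)
  have "card (insert x I) = Suc (card I)"
    using fin False by simp
  then have "\<not> bin_indep R col (insert x I)"
    using max[of "insert x I"] assms(1,3) by auto
  then obtain J where J: "J \<subseteq> insert x I" "J \<noteq> {}" "col_sum R col J = (\<lambda>_. 0)"
    using fin unfolding bin_indep_iff by blast
  have "x \<in> J"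
    using J assms(2) unfolding bin_indep_iff by blast
  then have "J = sym_diff {x} (J - {x})"
    by blast
  moreover have "finite (J - {x})"
    using J(1) fin by (auto intro: finite_subset)
  ultimately have "(\<lambda>r. col_sum R col {x} r + col_sum R col (J - {x}) r) = (\<lambda>_. 0)"
    using J(3) col_sum_sym_diff[of "{x}" "J - {x}" R col] by simp
  then have "col_sum R col {x} = col_sum R col (J - {x})"
    by (simp only: fun_eq_iff bit_eq_iff_add_eq_0[symmetric]) simp
  moreover have "J - {x} \<in> Pow I"
    using J(1) by blast
  ultimately show ?thesis
    by (rule image_eqI)
qed

lemma col_sum_image_Pow_eq_of_max_indep:
  assumes "finite S" "I \<subseteq> S" "bin_indep R col I"
    and max: "\<And>I'. I' \<subseteq> S \<Longrightarrow> bin_indep R col I' \<Longrightarrow> card I' \<le> card I"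
  shows "col_sum R col ` Pow S = col_sum R col ` Pow I"
proof
  show "col_sum R col ` Pow I \<subseteq> col_sum R col ` Pow S"
    using assms(2) by blast
  have fin: "finite I"
    using assms(3) by (simp add: bin_indep_def)
  have "col_sum R col X \<in> col_sum R col ` Pow I" if "X \<subseteq> S" for X
    using finite_subset[OF that assms(1)] that
  proof (induction X rule: finite_induct)
    case empty
    then show ?case
      by blast
  next
    case (insert x X)
    have "insert x X = sym_diff {x} X"
      using insert.hyps(2) by blast
    then have "col_sum R col (insert x X) = (\<lambda>r. col_sum R col {x} r + col_sum R col X r)"
      using insert.hyps(1) by (simp add: col_sum_sym_diff)
    moreover have "col_sum R col {x} \<in> col_sum R col ` Pow I"
      using insert.prems assms by (intro col_sum_singleton_mem_image_Pow) auto
    ultimately show ?case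
      using insert fin by (simp add: col_sum_add_mem_image_Pow)
  qed
  then show "col_sum R col ` Pow S \<subseteq> col_sum R col ` Pow I"
    by blast
qed

lemma card_col_sum_image_Pow:
  assumes "finite S"
  shows "card (col_sum R col ` Pow S) = 2 ^ bin_rank R col S"
proof -
  obtain I where I: "I \<subseteq> S" "bin_indep R col I" "card I = bin_rank R col S"
    and max: "\<And>I'. I' \<subseteq> S \<Longrightarrow> bin_indep R col I' \<Longrightarrow> card I' \<le> card I"
    using bin_rank_attained[OF assms, of R col] by blast
  have "card (col_sum R col ` Pow S) = card (col_sum R col ` Pow I)"
    using col_sum_image_Pow_eq_of_max_indep[OF assms I(1,2) max] by simp
  also have "\<dots> = card (Pow I)"
    using inj_on_col_sum_Pow[OF I(2)] by (rule card_image)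
  also have "\<dots> = 2 ^ card I"
    using I(2) by (simp add: bin_indep_def card_Pow)
  finally show ?thesis
    unfolding I(3) .
qed

lemma card_cycle_space:
  assumes "finite S"
  shows "card (cycle_space R S col) = 2 ^ (card S - bin_rank R col S)"
proof -
  have "card (cycle_space R S col) * 2 ^ bin_rank R col S = 2 ^ (card S - bin_rank R col S) * 2 ^ bin_rank R col S"
    using card_Pow_eq_card_cycle_space_mult[OF assms, of R col] card_col_sum_image_Pow[OF assms, of R col]
      bin_rank_le_card[OF assms, of R col] by (simp flip: power_add)
  then show ?thesis
    by simp
qed

definition binary_subspace :: "'a set \<Rightarrow> 'a set set \<Rightarrow> bool" where
  "binary_subspace V K \<longleftrightarrow> K \<subseteq> Pow V \<and> {} \<in> K \<and> (\<forall>X\<in>K. \<forall>Y\<in>K. sym_diff X Y \<in> K)"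

definition orth_compl :: "'a set \<Rightarrow> 'a set set \<Rightarrow> 'a set set" where
  "orth_compl V K = {Y. Y \<subseteq> V \<and> (\<forall>X\<in>K. even (card (X \<inter> Y)))}"

lemma cocycle_space_eq_orth_compl: "cocycle_space R S col = orth_compl S (cycle_space R S col)"
  by (simp add: cocycle_space_def orth_compl_def)

lemma binary_subspace_cycle_space:
  assumes "finite S"
  shows "binary_subspace S (cycle_space R S col)"
  unfolding binary_subspace_def
proof (intro conjI ballI)
  show "cycle_space R S col \<subseteq> Pow S" "{} \<in> cycle_space R S col"
    by (auto simp: cycle_space_def)
  fix X Y assume "X \<in> cycle_space R S col" "Y \<in> cycle_space R S col"
  moreover from this have "finite X" "finite Y"
    using assms by (auto simp: cycle_space_def intro: finite_subset)
  ultimately show "sym_diff X Y \<in> cycle_space R S col"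
    by (auto simp: cycle_space_eq col_sum_sym_diff)
qed

definition parity_sign :: "'a set \<Rightarrow> 'a set \<Rightarrow> int" where
  "parity_sign X Y = (-1) ^ card (X \<inter> Y)"

lemma parity_sign_eq: "parity_sign X Y = (if even (card (X \<inter> Y)) then 1 else -1)"
  unfolding parity_sign_def by (rule minus_one_power_iff)

lemma parity_sign_commute: "parity_sign X Y = parity_sign Y X"
  by (simp add: parity_sign_def Int_commute)

lemma parity_sign_sym_diff:
  "finite A \<Longrightarrow> finite B \<Longrightarrow> parity_sign (sym_diff A B) Y = parity_sign A Y * parity_sign B Y"
  unfolding parity_sign_eq using even_card_sym_diff_Int[of A B Y] by auto

lemma sum_eq_0_if_sign_reversing:
  assumes "bij_betw h S S" "\<And>x. x \<in> S \<Longrightarrow> g (h x) = - (g x :: int)"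
  shows "sum g S = 0"
proof -
  have "sum g S = sum (g \<circ> h) S"
    using sum.reindex_bij_betw[OF assms(1), of g] by simp
  also have "\<dots> = - sum g S"
    using assms(2) by (simp add: sum_negf)
  finally show ?thesis
    by simp
qed

lemma sum_parity_sign_binary_subspace:
  assumes "finite V" "binary_subspace V K" "Y \<subseteq> V"
  shows "(\<Sum>X\<in>K. parity_sign X Y) = (if Y \<in> orth_compl V K then int (card K) else 0)"
proof (cases "Y \<in> orth_compl V K")
  case True
  then have "parity_sign X Y = 1" if "X \<in> K" for X
    using that by (simp add: orth_compl_def parity_sign_eq)
  then show ?thesis
    using True by simp
next
  case False
  then obtain X0 where X0: "X0 \<in> K" "odd (card (X0 \<inter> Y))"
    using assms(3) unfolding orth_compl_def by blast
  have K: "K \<subseteq> Pow V" "\<And>X Y. X \<in> K \<Longrightarrow> Y \<in> K \<Longrightarrow> sym_diff X Y \<in> K"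
    using assms(2) by (auto simp: binary_subspace_def)
  have fin: "finite X" if "X \<in> K" for X
    using that K(1) assms(1) by (auto intro: finite_subset)
  have "(\<Sum>X\<in>K. parity_sign X Y) = 0"
  proof (rule sum_eq_0_if_sign_reversing)
    show "bij_betw (\<lambda>X. sym_diff X X0) K K"
      by (rule bij_betw_byWitness[where f' = "\<lambda>X. sym_diff X X0"]) (auto simp: X0(1) K(2))
    show "parity_sign (sym_diff X X0) Y = - parity_sign X Y" if "X \<in> K" for X
      using X0(2) by (simp add: parity_sign_sym_diff fin that X0(1) parity_sign_eq[of X0])
  qed
  then show ?thesis
    using False by simp
qed

lemma sum_parity_sign_Pow:
  assumes "finite V" "X \<subseteq> V"
  shows "(\<Sum>Y\<in>Pow V. parity_sign X Y) = (if X = {} then 2 ^ card V else 0)"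
proof (cases "X = {}")
  case True
  then show ?thesis
    using assms(1) by (simp add: parity_sign_def card_Pow)
next
  case False
  then obtain x where x: "x \<in> X"
    by blast
  have "(\<Sum>Y\<in>Pow V. parity_sign X Y) = 0"
  proof (rule sum_eq_0_if_sign_reversing)
    show "bij_betw (\<lambda>Y. sym_diff Y {x}) (Pow V) (Pow V)"
      by (rule bij_betw_byWitness[where f' = "\<lambda>Y. sym_diff Y {x}"]) (use x assms(2) in auto)
    show "parity_sign X (sym_diff Y {x}) = - parity_sign X Y" if "Y \<in> Pow V" for Y
    proof -
      have "finite Y"
        using that assms(1) by (auto intro: finite_subset)
      moreover have "parity_sign {x} X = -1"
        using x by (simp add: parity_sign_def)
      ultimately show ?thesis
        by (simp add: parity_sign_commute[of X] parity_sign_sym_diff)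
    qed
  qed
  then show ?thesis
    using False by simp
qed

text \<open>Double counting of the sum of (-1)^|X \<inter> Y| over X \<in> K and Y \<subseteq> V.\<close>

lemma card_mult_card_orth_compl:
  assumes "finite V" "binary_subspace V K"
  shows "card K * card (orth_compl V K) = 2 ^ card V"
proof -
  have K: "K \<subseteq> Pow V" "{} \<in> K"
    using assms(2) by (auto simp: binary_subspace_def)
  then have finK: "finite K"
    using assms(1) by (auto intro: finite_subset)
  have orth: "orth_compl V K \<subseteq> Pow V"
    by (auto simp: orth_compl_def)
  have "int (card K * card (orth_compl V K)) = (\<Sum>Y\<in>orth_compl V K. int (card K))"
    by simp
  also have "\<dots> = (\<Sum>Y\<in>Pow V. if Y \<in> orth_compl V K then int (card K) else 0)"
    using assms(1) orth by (simp add: sum.If_cases Int_absorb1)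
  also have "\<dots> = (\<Sum>Y\<in>Pow V. \<Sum>X\<in>K. parity_sign X Y)"
    using assms by (simp add: sum_parity_sign_binary_subspace)
  also have "\<dots> = (\<Sum>X\<in>K. \<Sum>Y\<in>Pow V. parity_sign X Y)"
    by (rule sum.swap)
  also have "\<dots> = (\<Sum>X\<in>K. if X = {} then 2 ^ card V else 0)"
    using K(1) by (intro sum.cong refl sum_parity_sign_Pow[OF assms(1)]) auto
  also have "\<dots> = 2 ^ card V"
    using finK K(2) by (simp add: sum.delta)
  finally have "int (card K * card (orth_compl V K)) = int (2 ^ card V)"
    by (simp only: of_nat_power of_nat_numeral)
  then show ?thesis
    by (simp only: of_nat_eq_iff)
qed

lemma eq_orth_compl_if_card:
  assumes "finite V" "binary_subspace V K" "L \<subseteq> orth_compl V K"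
    and "card K * card L = 2 ^ card V"
  shows "L = orth_compl V K"
proof -
  have "{} \<in> K" "K \<subseteq> Pow V"
    using assms(2) by (auto simp: binary_subspace_def)
  then have "card K > 0"
    using assms(1) by (auto simp: card_gt_0_iff intro: finite_subset)
  then have "card L = card (orth_compl V K)"
    using card_mult_card_orth_compl[OF assms(1,2)] assms(4) nat_mult_eq_cancel1 by metis
  moreover have "finite (orth_compl V K)"
    using assms(1) by (auto simp: orth_compl_def)
  ultimately show ?thesis
    using assms(3) by (simp add: card_subset_eq)
qed

definition kind_col :: "('a \<Rightarrow> 'a \<Rightarrow> bool) \<Rightarrow> ('a \<Rightarrow> wkind) \<Rightarrow> 'a \<Rightarrow> 'a \<Rightarrow> bit" where
  "kind_col E k v = ias_col E (k v, v)"

fun id_coeff :: "wkind \<Rightarrow> bit" where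
  "id_coeff Phi = 1" | "id_coeff Chi = 0" | "id_coeff Psi = 1"

fun adj_coeff :: "wkind \<Rightarrow> bit" where
  "adj_coeff Phi = 0" | "adj_coeff Chi = 1" | "adj_coeff Psi = 1"

lemma ias_col_eq_coeffs:
  "ias_col E (k, v) r = id_coeff k * (if r = v then 1 else 0) + adj_coeff k * adj_mat E r v"
  by (cases k) (simp_all add: add.commute)

lemma coeff_det_eq_1: "k \<noteq> k' \<Longrightarrow> adj_coeff k' * id_coeff k + adj_coeff k * id_coeff k' = 1"
  by (cases k; cases k') simp_all

lemma ias_col_third_kind:
  assumes "k1 \<noteq> k2" "k1 \<noteq> k3" "k2 \<noteq> k3"
  shows "ias_col E (k3, v) r = ias_col E (k1, v) r + ias_col E (k2, v) r"
  using assms by (cases k1; cases k2; cases k3) (simp_all add: add.assoc)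

lemma cycle_space_row_identity:
  assumes "finite V" "X \<in> cycle_space V V (kind_col E k)" "r \<in> V"
  shows "(if r \<in> X then id_coeff (k r) else 0) = (\<Sum>x\<in>X. adj_coeff (k x) * adj_mat E r x)"
proof -
  have "finite X"
    using assms(1,2) by (auto simp: cycle_space_def intro: finite_subset)
  moreover have "id_coeff (k x) * (if r = x then 1 else 0) = (if x = r then id_coeff (k x) else 0)" for x
    by simp
  ultimately have "(\<Sum>x\<in>X. kind_col E k x r)
      = (if r \<in> X then id_coeff (k r) else 0) + (\<Sum>x\<in>X. adj_coeff (k x) * adj_mat E r x)"
    by (simp add: kind_col_def ias_col_eq_coeffs sum.distrib)
  moreover have "(\<Sum>x\<in>X. kind_col E k x r) = 0"
    using assms(2,3) by (simp add: cycle_space_def)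
  ultimately show ?thesis
    by (subst bit_eq_iff_add_eq_0) simp
qed

lemma sum_Int_cycle_space:
  assumes "finite V" "X \<in> cycle_space V V (kind_col E k)" "Y \<subseteq> V"
  shows "(\<Sum>v\<in>Y \<inter> X. c v * id_coeff (k v)) = (\<Sum>v\<in>Y. \<Sum>x\<in>X. c v * adj_coeff (k x) * adj_mat E v x)"
proof -
  have "finite Y"
    using assms(1,3) by (rule finite_subset[rotated])
  then have "(\<Sum>v\<in>Y \<inter> X. c v * id_coeff (k v)) = (\<Sum>v\<in>Y. if v \<in> X then c v * id_coeff (k v) else 0)"
    by (rule sum.inter_restrict)
  also have "\<dots> = (\<Sum>v\<in>Y. c v * (\<Sum>x\<in>X. adj_coeff (k x) * adj_mat E v x))"
  proof (rule sum.cong[OF refl])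
    fix v assume "v \<in> Y"
    have "(if v \<in> X then c v * id_coeff (k v) else 0) = c v * (if v \<in> X then id_coeff (k v) else 0)"
      by simp
    also have "(if v \<in> X then id_coeff (k v) else 0) = (\<Sum>x\<in>X. adj_coeff (k x) * adj_mat E v x)"
      using \<open>v \<in> Y\<close> assms(3) by (intro cycle_space_row_identity[OF assms(1,2)]) blast
    finally show "(if v \<in> X then c v * id_coeff (k v) else 0) = c v * (\<Sum>x\<in>X. adj_coeff (k x) * adj_mat E v x)" .
  qed
  also have "\<dots> = (\<Sum>v\<in>Y. \<Sum>x\<in>X. c v * adj_coeff (k x) * adj_mat E v x)"
    by (simp add: sum_distrib_left mult.assoc)
  finally show ?thesis .
qed

lemma cycle_spaces_orthogonal:
  assumes "finite V" and sym: "\<forall>v\<in>V. \<forall>w\<in>V. E v w = E w v" and "\<forall>v\<in>V. k1 v \<noteq> k2 v"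
    and X: "X \<in> cycle_space V V (kind_col E k1)"
    and Y: "Y \<in> cycle_space V V (kind_col E k2)"
  shows "even (card (X \<inter> Y))"
proof -
  let ?a1 = "\<lambda>v. adj_coeff (k1 v)" and ?a2 = "\<lambda>v. adj_coeff (k2 v)"
  have XV: "X \<subseteq> V" and YV: "Y \<subseteq> V"
    using X Y by (auto simp: cycle_space_def)
  have symA: "adj_mat E v x = adj_mat E x v" if "v \<in> V" "x \<in> V" for v x
    using sym that by (simp add: adj_mat_def)
  have "(of_nat (card (X \<inter> Y)) :: bit) = (\<Sum>v\<in>X \<inter> Y. 1)"
    by simp
  also have "\<dots> = (\<Sum>v\<in>X \<inter> Y. ?a2 v * id_coeff (k1 v) + ?a1 v * id_coeff (k2 v))"
    using assms(3) XV by (intro sum.cong refl coeff_det_eq_1[symmetric]) blast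
  also have "\<dots> = (\<Sum>v\<in>Y \<inter> X. ?a2 v * id_coeff (k1 v)) + (\<Sum>v\<in>X \<inter> Y. ?a1 v * id_coeff (k2 v))"
    by (simp only: sum.distrib Int_commute[of X Y])
  also have "\<dots> = (\<Sum>v\<in>Y. \<Sum>x\<in>X. ?a2 v * ?a1 x * adj_mat E v x)
      + (\<Sum>v\<in>X. \<Sum>y\<in>Y. ?a1 v * ?a2 y * adj_mat E v y)"
    using assms(1) X Y XV YV by (simp add: sum_Int_cycle_space)
  also have "(\<Sum>v\<in>X. \<Sum>y\<in>Y. ?a1 v * ?a2 y * adj_mat E v y)
      = (\<Sum>y\<in>Y. \<Sum>v\<in>X. ?a1 v * ?a2 y * adj_mat E v y)"
    by (rule sum.swap)
  also have "\<dots> = (\<Sum>v\<in>Y. \<Sum>x\<in>X. ?a2 v * ?a1 x * adj_mat E v x)"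
  proof (intro sum.cong refl)
    fix y x assume "y \<in> Y" "x \<in> X"
    then show "?a1 x * ?a2 y * adj_mat E x y = ?a2 y * ?a1 x * adj_mat E y x"
      using XV YV symA by (simp add: mult.commute subset_iff)
  qed
  finally show ?thesis
    by (simp add: of_nat_bit_eq_0_iff[symmetric])
qed

lemma bin_indep_image:
  assumes "inj_on h I"
  shows "bin_indep R col (h ` I) \<longleftrightarrow> bin_indep R (\<lambda>x. col (h x)) I"
proof -
  have "(\<Sum>x\<in>h ` J. col x r) = (\<Sum>x\<in>J. col (h x) r)" if "J \<subseteq> I" for J r
    using sum.reindex[OF inj_on_subset[OF assms that]] by simp
  then show ?thesis
    unfolding bin_indep_def finite_image_iff[OF assms] all_subset_image
    by (auto simp: image_is_empty)
qed

lemma bin_rank_bij_betw: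
  assumes "bij_betw h S T"
  shows "bin_rank R col T = bin_rank R (\<lambda>x. col (h x)) S"
proof -
  have inj: "inj_on h J" if "J \<subseteq> S" for J
    using assms that by (auto simp: bij_betw_def intro: inj_on_subset)
  have "{card I | I. I \<subseteq> T \<and> bin_indep R col I}
      = {card (h ` J) | J. J \<subseteq> S \<and> bin_indep R col (h ` J)}"
    using assms by (auto simp: bij_betw_def subset_image_iff)
  also have "\<dots> = {card J | J. J \<subseteq> S \<and> bin_indep R (\<lambda>x. col (h x)) J}"
    using inj by (auto simp: card_image bin_indep_image) (metis card_image bin_indep_image)
  finally show ?thesis
    unfolding bin_rank_def by simp
qed

definition kind_of :: "(wkind \<times> 'a) set \<Rightarrow> 'a \<Rightarrow> wkind" where
  "kind_of T v = (THE k. (k, v) \<in> T)"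

lemma kind_of_mem:
  assumes "transversal V T" "v \<in> V"
  shows "(kind_of T v, v) \<in> T"
proof -
  have "\<exists>!k. (k, v) \<in> T"
    using assms unfolding transversal_def by blast
  then show ?thesis
    unfolding kind_of_def by (rule theI')
qed

lemma kind_of_eq:
  assumes "transversal V T" "(k, v) \<in> T"
  shows "kind_of T v = k"
proof -
  have "v \<in> V"
    using assms by (auto simp: transversal_def W_def)
  then have "\<exists>!k. (k, v) \<in> T"
    using assms(1) unfolding transversal_def by blast
  then show ?thesis
    unfolding kind_of_def using assms(2) by (rule the1_equality)
qed

lemma trans_col_eq: "trans_col E T = kind_col E (kind_of T)"
  by (simp add: fun_eq_iff trans_col_def kind_col_def tv_def kind_of_def)

lemma bij_betw_tv:
  assumes "transversal V T"
  shows "bij_betw (tv T) V T"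
proof (rule bij_betw_byWitness[where f' = snd])
  show "\<forall>v\<in>V. snd (tv T v) = v"
    by (simp add: tv_def)
  show "\<forall>p\<in>T. tv T (snd p) = p"
    using kind_of_eq[OF assms] by (auto simp: tv_def kind_of_def[symmetric])
  show "tv T ` V \<subseteq> T"
    using kind_of_mem[OF assms] by (auto simp: tv_def kind_of_def[symmetric])
  show "snd ` T \<subseteq> V"
    using assms by (auto simp: transversal_def W_def)
qed

lemma bin_rank_trans_col:
  "transversal V T \<Longrightarrow> bin_rank V (ias_col E) T = bin_rank V (trans_col E T) V"
  unfolding trans_col_def by (rule bin_rank_bij_betw[OF bij_betw_tv])

lemma ex1_third_kind: "(a::wkind) \<noteq> b \<Longrightarrow> \<exists>!k. k \<noteq> a \<and> k \<noteq> b"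
  by (cases a; cases b) (auto, (metis wkind.exhaust)+)

lemma kind_of_neq_if_disjoint:
  assumes "transversal V T1" "transversal V T2" "T1 \<inter> T2 = {}" "v \<in> V"
  shows "kind_of T1 v \<noteq> kind_of T2 v"
  using kind_of_mem[OF assms(1,4)] kind_of_mem[OF assms(2,4)] assms(3) by auto

lemma transversal_remaining:
  assumes "transversal V T1" "transversal V T2" "T1 \<inter> T2 = {}"
  shows "transversal V (W V - (T1 \<union> T2))"
  unfolding transversal_def
proof (intro conjI ballI)
  show "W V - (T1 \<union> T2) \<subseteq> W V"
    by blast
  fix v assume "v \<in> V"
  then have "(k, v) \<in> W V - (T1 \<union> T2) \<longleftrightarrow> k \<noteq> kind_of T1 v \<and> k \<noteq> kind_of T2 v" for k
    using kind_of_mem[OF assms(1)] kind_of_mem[OF assms(2)] kind_of_eq[OF assms(1)] kind_of_eq[OF assms(2)]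
    by (auto simp: W_def)
  then show "\<exists>!k. (k, v) \<in> W V - (T1 \<union> T2)"
    using ex1_third_kind[OF kind_of_neq_if_disjoint[OF assms \<open>v \<in> V\<close>]] by simp
qed

lemma cycle_space_subset_cocycle_space:
  assumes "finite V" "\<forall>v\<in>V. \<forall>w\<in>V. E v w = E w v" "\<forall>v\<in>V. k1 v \<noteq> k2 v"
  shows "cycle_space V V (kind_col E k2) \<subseteq> cocycle_space V V (kind_col E k1)"
  using cycle_spaces_orthogonal[OF assms] by (auto simp: cocycle_space_def cycle_space_def)

lemma cycle_space_eq_cocycle_space_if_ranks_complementary:
  assumes "finite V" "\<forall>v\<in>V. \<forall>w\<in>V. E v w = E w v" "\<forall>v\<in>V. k1 v \<noteq> k2 v"
    and "bin_rank V (kind_col E k1) V + bin_rank V (kind_col E k2) V = card V"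
  shows "cycle_space V V (kind_col E k2) = cocycle_space V V (kind_col E k1)"
  unfolding cocycle_space_eq_orth_compl
proof (rule eq_orth_compl_if_card[OF assms(1) binary_subspace_cycle_space[OF assms(1)]])
  show "cycle_space V V (kind_col E k2) \<subseteq> orth_compl V (cycle_space V V (kind_col E k1))"
    using cycle_space_subset_cocycle_space[OF assms(1-3)] by (simp only: cocycle_space_eq_orth_compl)
  show "card (cycle_space V V (kind_col E k1)) * card (cycle_space V V (kind_col E k2)) = 2 ^ card V"
    using assms(4) by (simp add: card_cycle_space[OF assms(1)] flip: power_add)
qed

lemma cycle_space_Int_subset_third_kind:
  assumes "\<forall>v\<in>V. k1 v \<noteq> k2 v \<and> k1 v \<noteq> k3 v \<and> k2 v \<noteq> k3 v"
  shows "cycle_space V V (kind_col E k1) \<inter> cycle_space V V (kind_col E k2)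
    \<subseteq> cycle_space V V (kind_col E k3)"
proof
  fix X assume X: "X \<in> cycle_space V V (kind_col E k1) \<inter> cycle_space V V (kind_col E k2)"
  then have XV: "X \<subseteq> V"
    by (simp add: cycle_space_def)
  have "(\<Sum>x\<in>X. kind_col E k3 x r) = (\<Sum>x\<in>X. kind_col E k1 x r) + (\<Sum>x\<in>X. kind_col E k2 x r)" for r
    unfolding sum.distrib[symmetric] kind_col_def using assms XV by (intro sum.cong refl ias_col_third_kind) blast+
  then show "X \<in> cycle_space V V (kind_col E k3)"
    using X XV by (simp add: cycle_space_def)
qed

lemma bicycle_spaces_of_complementary_kinds:
  assumes "finite V" and sym: "\<forall>v\<in>V. \<forall>w\<in>V. E v w = E w v"
    and kinds: "\<forall>v\<in>V. k1 v \<noteq> k2 v \<and> k1 v \<noteq> k3 v \<and> k2 v \<noteq> k3 v"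
    and rank: "bin_rank V (kind_col E k1) V + bin_rank V (kind_col E k2) V = card V"
  shows "bicycle_space V V (kind_col E k1) = bicycle_space V V (kind_col E k2)"
    and "bicycle_space V V (kind_col E k1) = cycle_space V V (kind_col E k3)"
proof -
  let ?K = "\<lambda>k. cycle_space V V (kind_col E k)"
  let ?P = "\<lambda>k. cocycle_space V V (kind_col E k)"
  have K2: "?K k2 = ?P k1"
    using kinds rank by (intro cycle_space_eq_cocycle_space_if_ranks_complementary[OF assms(1) sym]) auto
  have K1: "?K k1 = ?P k2"
    using kinds rank by (intro cycle_space_eq_cocycle_space_if_ranks_complementary[OF assms(1) sym]) auto
  have "?K k3 \<subseteq> ?P k1" "?K k3 \<subseteq> ?P k2"
    using kinds by (auto intro!: cycle_space_subset_cocycle_space[OF assms(1) sym])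
  then have "?K k3 = ?K k1 \<inter> ?K k2"
    using cycle_space_Int_subset_third_kind[OF kinds] K1 K2 by blast
  then show "bicycle_space V V (kind_col E k1) = bicycle_space V V (kind_col E k2)"
    and "bicycle_space V V (kind_col E k1) = ?K k3"
    unfolding bicycle_space_def K1[symmetric] K2[symmetric] by blast+
qed

theorem corollary5p4:
  fixes V :: "'a set" and E :: "'a \<Rightarrow> 'a \<Rightarrow> bool" and T1 T2 :: "(wkind \<times> 'a) set"
  assumes "looped_simple_graph V E"
    and "transversal V T1" and "transversal V T2" and "T1 \<inter> T2 = {}"
    and "bin_rank V (ias_col E) T1 + bin_rank V (ias_col E) T2 = card V"
  shows "let T3 = W V - (T1 \<union> T2) in
     bicycle_space V V (trans_col E T1) = bicycle_space V V (trans_col E T2) \<and>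
     bicycle_space V V (trans_col E T1) = cycle_space V V (trans_col E T3)"
proof -
  define T3 where "T3 = W V - (T1 \<union> T2)"
  have fin: "finite V" and sym: "\<forall>v\<in>V. \<forall>w\<in>V. E v w = E w v"
    using assms(1) by (auto simp: looped_simple_graph_def)
  have T3: "transversal V T3" "T1 \<inter> T3 = {}" "T2 \<inter> T3 = {}"
    unfolding T3_def using transversal_remaining[OF assms(2-4)] by auto
  have "\<forall>v\<in>V. kind_of T1 v \<noteq> kind_of T2 v \<and> kind_of T1 v \<noteq> kind_of T3 v \<and> kind_of T2 v \<noteq> kind_of T3 v"
    using kind_of_neq_if_disjoint[OF assms(2-4)] kind_of_neq_if_disjoint[OF assms(2) T3(1,2)]
      kind_of_neq_if_disjoint[OF assms(3) T3(1,3)] by blast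
  moreover have "bin_rank V (trans_col E T1) V + bin_rank V (trans_col E T2) V = card V"
    using assms(5) by (simp add: bin_rank_trans_col assms(2,3))
  ultimately have "bicycle_space V V (trans_col E T1) = bicycle_space V V (trans_col E T2)"
    and "bicycle_space V V (trans_col E T1) = cycle_space V V (trans_col E T3)"
    unfolding trans_col_eq by (rule bicycle_spaces_of_complementary_kinds[OF fin sym])+
  then show ?thesis
    unfolding Let_def T3_def by blast
qed

end
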